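(* Let $\eta\in Q^+\setminus\{0\}$, $g\in U(\mathfrak n^-_{r-1}[t])_{-\eta}$, and $(\underline\ell,\underline{\mathbf s})\in\mathbf F_+^r$. Then $[\underline{\mathbf x}^+_r(\underline\ell,\underline{\mathbf s}),g]$ is a linear combination of elements $g'\,\underline{\mathbf x}^+_r(\underline\ell',\underline{\mathbf s}')$ with $g'\in U(\mathfrak n^-_{r-1}[t])$, $(\underline\ell',\underline{\mathbf s}')\in\mathbf F_+^r$ and $|\underline{\mathbf s}'|\blacktriangleright|\underline{\mathbf s}|$.
   Context: $\mathfrak g=\mathfrak{sl}_{r+1}(\mathbb C)$, $r\ge2$, $\mathfrak h$ diagonal, simple roots $\alpha_i$, $Q^+=\sum\mathbb N\alpha_i$; $x^+_{i,j}=E_{i,j+1}$, $x^-_{i,j}=E_{j+1,i}$; $\mathfrak n^-_{r-1}=\bigoplus_{1\le i\le j\le r-1}\mathbb Cx^-_{i,j}$; $\mathfrak a[t]=\mathfrak a\otimes\mathbb C[t]$. $U(\mathfrak n^-_{r-1}[t])_{-\eta}$ is the $-\eta$ weight space for the adjoint action of $\mathfrak h$. $\mathbf F_+$: pairs $(\ell,\mathbf s)$ with $\ell\in\mathbb N$, $\mathbf s=(\mathbf s(1)\le\dots\le\mathbf s(\ell))$, all $\mathbf s(p)\in\mathbb N_+$ (including $(0,\emptyset)$), $|\mathbf s|=\sum\mathbf s(p)$. $\mathbf x^+_{i,r}(\ell,\mathbf s)=\prod_p(x^+_{i,r}\otimes t^{\mathbf s(p)})$, $\underline{\mathbf x}^+_r(\underline\ell,\underline{\mathbf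 s})=\mathbf x^+_{1,r}(\ell_1,\mathbf s_1)\cdots\mathbf x^+_{r,r}(\ell_r,\mathbf s_r)$, $|\underline{\mathbf s}|=(|\mathbf s_1|,\dots,|\mathbf s_r|)$. For $\underline d,\underline d'\in\mathbb N^r$, $\underline d\blacktriangleright\underline d'$ means that for some $s$, $d_i=d'_i$ for all $i>s$ and $d_s>d'_s$. *)

theory Defs
  imports Complex_Main
begin

text \<open>Basis of sl_{r+1}[t]:  E i j k = E_{i,j} \<otimes> t^k  (i \<noteq> j, 1 \<le> i,j \<le> r+1),
  H m k = (E_{m,m} - E_{m+1,m+1}) \<otimes> t^k  (1 \<le> m \<le> r).\<close>
datatype gen = E nat nat nat | H nat nat

fun valid :: "nat \<Rightarrow> gen \<Rightarrow> bool" where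
  "valid r (E i j k) = (1 \<le> i \<and> i \<le> r+1 \<and> 1 \<le> j \<and> j \<le> r+1 \<and> i \<noteq> j)"
| "valid r (H m k) = (1 \<le> m \<and> m \<le> r)"

text \<open>Free associative algebra on the basis: finitely supported functions on words.\<close>
type_synonym fa = "gen list \<Rightarrow> complex"

definition mon :: "gen list \<Rightarrow> fa" where "mon w = (\<lambda>v. if v = w then 1 else 0)"
definition fzero :: fa where "fzero = (\<lambda>_. 0)"
definition fadd :: "fa \<Rightarrow> fa \<Rightarrow> fa" where "fadd f g = (\<lambda>w. f w + g w)"
definition fsub :: "fa \<Rightarrow> fa \<Rightarrow> fa" where "fsub f g = (\<lambda>w. f w - g w)"
definition fscale :: "complex \<Rightarrow> fa \<Rightarrow> fa" where "fscale c f = (\<lambda>w. c * f w)"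
definition fmul :: "fa \<Rightarrow> fa \<Rightarrow> fa" where
  "fmul f g = (\<lambda>w. \<Sum>k\<in>{0..length w}. f (take k w) * g (drop k w))"
definition fcomm :: "fa \<Rightarrow> fa \<Rightarrow> fa" where "fcomm f g = fsub (fmul f g) (fmul g f)"
definition fsum :: "nat \<Rightarrow> (nat \<Rightarrow> fa) \<Rightarrow> fa" where "fsum n F = (\<lambda>w. \<Sum>k<n. F k w)"

text \<open>(E_{ii} - E_{jj}) \<otimes> t^c expressed in the H basis.\<close>
definition hdiff :: "nat \<Rightarrow> nat \<Rightarrow> nat \<Rightarrow> fa" where
  "hdiff i j c = (if i < j then (\<lambda>w. \<Sum>m\<in>{i..<j}. mon [H m c] w)
                 else (\<lambda>w. - (\<Sum>m\<in>{j..<i}. mon [H m c] w)))"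

text \<open>[h_m, E_{ij}] = hcoef m i j * E_{ij}\<close>
definition hcoef :: "nat \<Rightarrow> nat \<Rightarrow> nat \<Rightarrow> complex" where
  "hcoef m i j = (if m = i then 1 else 0) - (if m + 1 = i then 1 else 0)
               - (if m = j then 1 else 0) + (if m + 1 = j then 1 else 0)"

text \<open>Lie bracket of sl_{r+1}[t] on basis elements, as a linear combination of basis elements.\<close>
fun br :: "gen \<Rightarrow> gen \<Rightarrow> fa" where
  "br (E i j a) (E k l b) =
     (if j = k \<and> l = i then hdiff i j (a+b)
      else if j = k then mon [E i l (a+b)]
      else if l = i then fscale (-1) (mon [E k j (a+b)])
      else fzero)"
| "br (H m a) (E i j b) = fscale (hcoef m i j) (mon [E i j (a+b)])"
| "br (E i j b) (H m a) = fscale (- hcoef m i j) (mon [E i j (a+b)])"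
| "br (H m a) (H n b) = fzero"

definition rel :: "gen \<Rightarrow> gen \<Rightarrow> fa" where
  "rel x y = fsub (fsub (mon [x, y]) (mon [y, x])) (br x y)"

text \<open>Two-sided ideal defining U(sl_{r+1}[t]) as quotient of the free algebra.\<close>
inductive_set Uideal :: "nat \<Rightarrow> fa set" for r :: nat where
  zero: "fzero \<in> Uideal r"
| step: "\<lbrakk> a \<in> Uideal r; valid r x; valid r y; list_all (valid r) u; list_all (valid r) v \<rbrakk>
         \<Longrightarrow> fadd a (fscale c (fmul (mon u) (fmul (rel x y) (mon v)))) \<in> Uideal r"

text \<open>Equality in U(sl_{r+1}[t]).\<close>
definition ueq :: "nat \<Rightarrow> fa \<Rightarrow> fa \<Rightarrow> bool" where
  "ueq r f g \<longleftrightarrow> fsub f g \<in> Uideal r"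

text \<open>Generators x^-_{i,j} \<otimes> t^k = E_{j+1,i} \<otimes> t^k of n^-_{r-1}[t], 1 \<le> i \<le> j \<le> r-1.\<close>
definition nminus_gen :: "nat \<Rightarrow> gen \<Rightarrow> bool" where
  "nminus_gen r x \<longleftrightarrow> (\<exists>i j k. 1 \<le> i \<and> i \<le> j \<and> j \<le> r - 1 \<and> x = E (j+1) i k)"

text \<open>U(n^-_{r-1}[t]) inside U(sl_{r+1}[t]): span of monomials in its generators.\<close>
definition Uneg :: "nat \<Rightarrow> fa set" where
  "Uneg r = {f. finite {w. f w \<noteq> 0} \<and> (\<forall>w. f w \<noteq> 0 \<longrightarrow> list_all (nminus_gen r) w)}"

text \<open>eta(h_i) for eta = sum eta_j alpha_j (eta supported on 1..r).\<close>
definition eta_h :: "(nat \<Rightarrow> nat) \<Rightarrow> nat \<Rightarrow> int" where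
  "eta_h eta i = 2 * int (eta i) - int (eta (i - 1)) - int (eta (i + 1))"

text \<open>The -eta weight space of U(n^-_{r-1}[t]) for the adjoint action of h.\<close>
definition weight_space :: "nat \<Rightarrow> (nat \<Rightarrow> nat) \<Rightarrow> fa set" where
  "weight_space r eta = {g \<in> Uneg r. \<forall>i\<in>{1..r}.
      ueq r (fcomm (mon [H i 0]) g) (fscale (- of_int (eta_h eta i)) g)}"

text \<open>F_+ : (l, s) with s nondecreasing of positive integers, encoded as the list s (l = length s).\<close>
definition Fplus :: "nat list \<Rightarrow> bool" where
  "Fplus s \<longleftrightarrow> sorted s \<and> (\<forall>x\<in>set s. 0 < x)"

definition FplusR :: "nat \<Rightarrow> (nat \<Rightarrow> nat list) \<Rightarrow> bool" where
  "FplusR r ss \<longleftrightarrow> (\<forall>i\<in>{1..r}. Fplus (ss i))"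

text \<open>x^+_r(l, s) = x^+_{1,r}(l_1,s_1) ... x^+_{r,r}(l_r,s_r), with x^+_{i,r} = E_{i,r+1}.\<close>
definition xplus :: "nat \<Rightarrow> (nat \<Rightarrow> nat list) \<Rightarrow> fa" where
  "xplus r ss = mon (concat (map (\<lambda>i. map (E i (r+1)) (ss i)) [1..<r+1]))"

definition ssize :: "(nat \<Rightarrow> nat list) \<Rightarrow> nat \<Rightarrow> nat" where
  "ssize ss i = sum_list (ss i)"

definition btri :: "nat \<Rightarrow> (nat \<Rightarrow> nat) \<Rightarrow> (nat \<Rightarrow> nat) \<Rightarrow> bool" where
  "btri r d d' \<longleftrightarrow> (\<exists>s\<in>{1..r}. (\<forall>i. s < i \<and> i \<le> r \<longrightarrow> d i = d' i) \<and> d s > d' s)"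

end

theory Submission
  imports Defs "HOL-Library.Multiset"
begin

(* By linearity g may be taken to be a word w in the generators of n^-_{r-1}[t], and then
   x w - w x, for x the word of x^+_r(l, s), is computed by moving the letters of w one at a time
   to the left through x.
   The x^+-letters commute with each other, and the only nonzero bracket of an x^+-letter with a
   letter of w is
     [E_{p,r+1} t^a, E_{q,p} t^b] = - E_{q,r+1} t^{a+b}   with p < q,
   which trades a letter of row p for one of the higher row q: the last entry of the degree vector
   that changes is the one at q, and it grows, so the degree vector goes up in the order
   \<blacktriangleright>. As this order is transitive, the correction terms stay above |s| while the rest
   of w is moved through them, and reordering the x^+-letters of each resulting word w' x' gives
   w' x^+_r(l', s'). *)

lemma fadd_fzero [simp]: "fadd a fzero = a" "fadd fzero a = a"
  by (auto simp: fadd_def fzero_def)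

lemma fadd_assoc: "fadd (fadd a b) c = fadd a (fadd b c)"
  by (auto simp: fadd_def)

lemma fsub_self [simp]: "fsub a a = fzero"
  by (auto simp: fsub_def fzero_def)

lemma fsub_split: "fsub a b = fadd (fsub a c) (fsub c b)"
  by (auto simp: fsub_def fadd_def)

lemma fscale_one [simp]: "fscale 1 a = a"
  by (auto simp: fscale_def)

lemma fsub_fzero [simp]: "fsub a fzero = a"
  by (simp add: fsub_def fzero_def)

lemma fadd_fsub_cancel: "fadd (fsub a b) b = a"
  by (simp add: fadd_def fsub_def)

lemma fmul_mon_mon: "fmul (mon u) (mon v) = mon (u @ v)"
proof
  fix w
  have "mon u (take k w) * mon v (drop k w) = (if k = length u \<and> w = u @ v then 1 else 0)"
    if "k \<le> length w" for k
    using that by (auto simp: mon_def min_def)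
  then have "fmul (mon u) (mon v) w = (\<Sum>k\<in>{0..length w}. if k = length u \<and> w = u @ v then 1 else 0)"
    unfolding fmul_def by (intro sum.cong) auto
  then show "fmul (mon u) (mon v) w = mon (u @ v) w"
    by (simp add: mon_def)
qed

lemma fmul_fsub_left: "fmul (fsub a b) f = fsub (fmul a f) (fmul b f)"
  by (auto simp: fmul_def fsub_def left_diff_distrib sum_subtractf)

lemma fmul_fsub_right: "fmul f (fsub a b) = fsub (fmul f a) (fmul f b)"
  by (auto simp: fmul_def fsub_def right_diff_distrib sum_subtractf)

lemma fmul_fscale_left: "fmul (fscale c a) f = fscale c (fmul a f)"
  by (auto simp: fmul_def fscale_def sum_distrib_left algebra_simps)

lemma fmul_fscale_right: "fmul f (fscale c a) = fscale c (fmul f a)"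
  by (auto simp: fmul_def fscale_def sum_distrib_left algebra_simps)

lemma fmul_fzero [simp]: "fmul fzero f = fzero" "fmul f fzero = fzero"
  by (auto simp: fmul_def fzero_def)

lemma fmul_fadd_right: "fmul f (fadd a b) = fadd (fmul f a) (fmul f b)"
  by (auto simp: fmul_def fadd_def distrib_left sum.distrib)

lemma fmul_fadd_left: "fmul (fadd a b) f = fadd (fmul a f) (fmul b f)"
  by (auto simp: fmul_def fadd_def distrib_right sum.distrib)

lemma fcomm_fadd_right: "fcomm a (fadd f g) = fadd (fcomm a f) (fcomm a g)"
proof -
  have "fcomm a (fadd f g) = fsub (fadd (fmul a f) (fmul a g)) (fadd (fmul f a) (fmul g a))"
    by (simp add: fcomm_def fmul_fadd_left fmul_fadd_right)
  then show ?thesis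
    by (auto simp: fcomm_def fsub_def fadd_def)
qed

lemma fcomm_fscale_right: "fcomm a (fscale c f) = fscale c (fcomm a f)"
proof -
  have "fcomm a (fscale c f) = fsub (fscale c (fmul a f)) (fscale c (fmul f a))"
    by (simp add: fcomm_def fmul_fscale_left fmul_fscale_right)
  then show ?thesis
    by (auto simp: fcomm_def fsub_def fscale_def algebra_simps)
qed

lemma Uideal_add:
  assumes "a \<in> Uideal r" and "b \<in> Uideal r"
  shows "fadd a b \<in> Uideal r"
  using assms(2)
proof induction
  case (step b x y u v c)
  then show ?case
    using Uideal.step[of "fadd a b"] by (simp add: fadd_assoc)
qed (simp add: assms(1))

lemma Uideal_scale: "a \<in> Uideal r \<Longrightarrow> fscale c a \<in> Uideal r"
proof (induction a rule: Uideal.induct)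
  case zero
  then show ?case
    using Uideal.zero by (simp add: fscale_def fzero_def)
next
  case (step b x y u v c')
  have "fscale c (fadd b (fscale c' m)) = fadd (fscale c b) (fscale (c * c') m)" for m
    by (auto simp: fadd_def fscale_def algebra_simps)
  then show ?case
    using step Uideal.step by metis
qed

lemma ueq_refl: "ueq r a a"
  by (simp add: ueq_def Uideal.zero)

lemma ueq_trans: "ueq r a b \<Longrightarrow> ueq r b c \<Longrightarrow> ueq r a c"
  unfolding ueq_def using Uideal_add fsub_split by metis

lemma ueq_add:
  assumes "ueq r a b" and "ueq r c d"
  shows "ueq r (fadd a c) (fadd b d)"
proof -
  have "fsub (fadd a c) (fadd b d) = fadd (fsub a b) (fsub c d)"
    by (auto simp: fsub_def fadd_def)
  with assms show ?thesis
    unfolding ueq_def by (simp add: Uideal_add)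
qed

lemma ueq_scale:
  assumes "ueq r a b"
  shows "ueq r (fscale c a) (fscale c b)"
proof -
  have "fsub (fscale c a) (fscale c b) = fscale c (fsub a b)"
    by (auto simp: fsub_def fscale_def algebra_simps)
  with assms show ?thesis
    unfolding ueq_def by (simp add: Uideal_scale)
qed

lemma ueq_swap:
  assumes "valid r x" "valid r y" "list_all (valid r) u" "list_all (valid r) v"
  shows "ueq r (fsub (mon (u @ x # y # v)) (mon (u @ y # x # v))) (fmul (mon u) (fmul (br x y) (mon v)))"
proof -
  have "fsub (fsub (mon (u @ x # y # v)) (mon (u @ y # x # v))) (fmul (mon u) (fmul (br x y) (mon v)))
      = fmul (mon u) (fmul (rel x y) (mon v))"
    by (simp add: rel_def fmul_fsub_left fmul_fsub_right fmul_mon_mon)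
  then show ?thesis
    using Uideal.step[OF Uideal.zero assms, of 1] by (simp add: ueq_def)
qed

(* The preimage in the free algebra of the span of the image of S in U(sl_{r+1}[t]). *)
inductive_set uspan :: "nat \<Rightarrow> fa set \<Rightarrow> fa set" for r :: nat and S :: "fa set" where
  uspan_zero: "fzero \<in> uspan r S"
| uspan_base: "b \<in> S \<Longrightarrow> b \<in> uspan r S"
| uspan_add: "a \<in> uspan r S \<Longrightarrow> b \<in> uspan r S \<Longrightarrow> fadd a b \<in> uspan r S"
| uspan_scale: "a \<in> uspan r S \<Longrightarrow> fscale c a \<in> uspan r S"
| uspan_ueq: "ueq r a b \<Longrightarrow> b \<in> uspan r S \<Longrightarrow> a \<in> uspan r S"

lemma uspan_subset:
  assumes "S \<subseteq> uspan r S'" and "a \<in> uspan r S"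
  shows "a \<in> uspan r S'"
  using assms(2) by induction (use assms(1) in \<open>auto intro: uspan.intros\<close>)

lemma uspan_mono: "S \<subseteq> S' \<Longrightarrow> a \<in> uspan r S \<Longrightarrow> a \<in> uspan r S'"
  using uspan_subset uspan_base by (metis subset_iff)

lemma fsum_add: "fsum (m + n) F = fadd (fsum m F) (fsum n (\<lambda>k. F (m + k)))"
  by (induction n) (auto simp: fsum_def fadd_def fun_eq_iff)

lemma uspan_fsum:
  assumes "a \<in> uspan r S"
  shows "\<exists>n c B. (\<forall>k<n. B k \<in> S) \<and> ueq r a (fsum n (\<lambda>k. fscale (c k) (B k)))"
  using assms
proof (induction a rule: uspan.induct)
  case uspan_zero
  have "fsum 0 F = fzero" for F
    by (simp add: fsum_def fzero_def)
  then show ?case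
    using ueq_refl[of r fzero] by (intro exI[of _ 0]) simp
next
  case (uspan_base b)
  have "fsum 1 (\<lambda>k. fscale 1 b) = b"
    by (simp add: fsum_def fun_eq_iff)
  then show ?case
    using uspan_base ueq_refl[of r b] by (intro exI[of _ 1] exI[of _ "\<lambda>_. 1"] exI[of _ "\<lambda>_. b"]) simp
next
  case (uspan_add a b)
  then obtain m c B n d D where
    a: "\<forall>k<m. B k \<in> S" "ueq r a (fsum m (\<lambda>k. fscale (c k) (B k)))" and
    b: "\<forall>k<n. D k \<in> S" "ueq r b (fsum n (\<lambda>k. fscale (d k) (D k)))"
    by blast
  let ?c = "\<lambda>k. if k < m then c k else d (k - m)"
  let ?B = "\<lambda>k. if k < m then B k else D (k - m)"
  have "fsum (m + n) (\<lambda>k. fscale (?c k) (?B k))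
      = fadd (fsum m (\<lambda>k. fscale (c k) (B k))) (fsum n (\<lambda>k. fscale (d k) (D k)))"
    unfolding fsum_add by (simp add: fsum_def)
  moreover have "\<forall>k<m + n. ?B k \<in> S"
    using a b by auto
  ultimately show ?case
    using ueq_add[OF a(2) b(2)] by (intro exI[of _ "m + n"] exI[of _ ?c] exI[of _ ?B]) simp
next
  case (uspan_scale a c')
  then obtain n c B where B: "\<forall>k<n. B k \<in> S" and a: "ueq r a (fsum n (\<lambda>k. fscale (c k) (B k)))"
    by blast
  have "fscale c' (fsum n (\<lambda>k. fscale (c k) (B k))) = fsum n (\<lambda>k. fscale (c' * c k) (B k))"
    by (simp add: fsum_def fscale_def sum_distrib_left mult.assoc)
  then show ?case
    using B ueq_scale[OF a, of c'] by metis
next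
  case (uspan_ueq a b)
  then show ?case
    using ueq_trans by blast
qed

lemma btri_trans: "btri r d2 d1 \<Longrightarrow> btri r d1 d0 \<Longrightarrow> btri r d2 d0"
  unfolding btri_def
proof (elim bexE conjE)
  fix s1 s0
  assume "s1 \<in> {1..r}" "\<forall>i. s1 < i \<and> i \<le> r \<longrightarrow> d2 i = d1 i" "d1 s1 < d2 s1"
    and "s0 \<in> {1..r}" "\<forall>i. s0 < i \<and> i \<le> r \<longrightarrow> d1 i = d0 i" "d0 s0 < d1 s0"
  then have "(\<forall>i. max s1 s0 < i \<and> i \<le> r \<longrightarrow> d2 i = d0 i) \<and> d0 (max s1 s0) < d2 (max s1 s0)"
    by (cases s1 s0 rule: linorder_cases) (auto simp: max_def)
  then show "\<exists>s\<in>{1..r}. (\<forall>i. s < i \<and> i \<le> r \<longrightarrow> d2 i = d0 i) \<and> d0 s < d2 s"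
    using \<open>s1 \<in> {1..r}\<close> \<open>s0 \<in> {1..r}\<close> by (intro bexI[of _ "max s1 s0"]) auto
qed

lemma btri_add: "btri r d' d \<Longrightarrow> btri r (\<lambda>i. e i + d' i) (\<lambda>i. e i + d i)"
  unfolding btri_def by auto

lemma btri_cong_right: "btri r d e \<Longrightarrow> \<forall>i\<in>{1..r}. e i = e' i \<Longrightarrow> btri r d e'"
  unfolding btri_def by (metis atLeastAtMost_iff le_trans less_imp_le_nat)

definition xplus_gen :: "nat \<Rightarrow> gen \<Rightarrow> bool" where
  "xplus_gen r z \<longleftrightarrow> (\<exists>i a. 1 \<le> i \<and> i \<le> r \<and> 0 < a \<and> z = E i (r+1) a)"

lemma xplus_gen_valid: "xplus_gen r z \<Longrightarrow> valid r z"
  by (auto simp: xplus_gen_def)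

lemma nminus_gen_valid: "nminus_gen r z \<Longrightarrow> valid r z"
  by (auto simp: nminus_gen_def)

(* For a word x in the letters x^+_{i,r} t^a, xpart x is the element of F_+^r it determines and
   xdeg x = |xpart x|; conversely xword r ss is the word of x^+_r(l, s). *)
fun xdegs :: "nat \<Rightarrow> gen list \<Rightarrow> nat list" where
  "xdegs i [] = []"
| "xdegs i (E j k a # x) = (if j = i then a # xdegs i x else xdegs i x)"
| "xdegs i (H m a # x) = xdegs i x"

definition xdeg :: "gen list \<Rightarrow> nat \<Rightarrow> nat" where
  "xdeg x i = sum_list (xdegs i x)"

definition xpart :: "gen list \<Rightarrow> nat \<Rightarrow> nat list" where
  "xpart x i = sort (xdegs i x)"

definition xword :: "nat \<Rightarrow> (nat \<Rightarrow> nat list) \<Rightarrow> gen list" where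
  "xword r ss = concat (map (\<lambda>i. map (E i (r+1)) (ss i)) [1..<r+1])"

lemma xplus_eq_mon_xword: "xplus r ss = mon (xword r ss)"
  by (simp add: xplus_def xword_def)

lemma xdeg_Cons: "xdeg (E j k a # x) = (\<lambda>i. (if j = i then a else 0) + xdeg x i)"
  by (auto simp: xdeg_def)

lemma btri_xdeg_raise:
  assumes "p < q" "q \<le> r" "0 < a'"
  shows "btri r (xdeg (E q k a' # x)) (xdeg (E p k' a # x))"
  unfolding btri_def xdeg_Cons using assms by (intro bexI[of _ q]) auto

lemma ssize_xpart: "ssize (xpart x) = xdeg x"
  by (auto simp: ssize_def xpart_def xdeg_def simp flip: sum_mset_sum_list)

lemma FplusR_xpart:
  assumes "list_all (xplus_gen r) x"
  shows "FplusR r (xpart x)"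
proof -
  have "0 < a" if "a \<in> set (xdegs i x)" for a i
    using assms that by (induction x) (auto simp: xplus_gen_def split: if_splits)
  then show ?thesis
    by (simp add: FplusR_def Fplus_def xpart_def)
qed

lemma xword_xplus_gen: "FplusR r ss \<Longrightarrow> list_all (xplus_gen r) (xword r ss)"
  by (auto simp: FplusR_def Fplus_def xword_def list_all_iff xplus_gen_def)

lemma concat_map_if_eq:
  "distinct js \<Longrightarrow> concat (map (\<lambda>j. if j = i then l else []) js) = (if i \<in> set js then l else [])"
  by (induction js) auto

lemma xdeg_xword:
  assumes "i \<in> {1..r}"
  shows "xdeg (xword r ss) i = ssize ss i"
proof -
  have xdegs_append: "xdegs i (x @ y) = xdegs i x @ xdegs i y" for x y
    by (induction i x rule: xdegs.induct) auto
  have "xdegs i (map (E j k) l) = (if j = i then l else [])" for j k l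
    by (induction l) auto
  moreover have "xdegs i (concat xs) = concat (map (xdegs i) xs)" for xs
    by (induction xs) (auto simp: xdegs_append)
  ultimately have "xdegs i (xword r ss) = concat (map (\<lambda>j. if j = i then ss i else []) [1..<r+1])"
    by (simp add: xword_def comp_def cong: if_cong)
  with assms show ?thesis
    by (simp add: concat_map_if_eq xdeg_def ssize_def)
qed

lemma mset_xword_xpart:
  assumes "list_all (xplus_gen r) x"
  shows "mset (xword r (xpart x)) = mset x"
proof -
  have "(\<Sum>i\<in>{1..r}. image_mset (E i (r+1)) (mset (xdegs i x))) = mset x"
    using assms
  proof (induction x)
    case (Cons z x)
    then obtain j a where z: "z = E j (r+1) a" "j \<in> {1..r}"
      by (auto simp: xplus_gen_def)
    then have "image_mset (E i (r+1)) (mset (xdegs i (z # x)))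
             = (if j = i then {#z#} else {#}) + image_mset (E i (r+1)) (mset (xdegs i x))" for i
      by simp
    with Cons z show ?case
      by (simp add: sum.distrib)
  qed simp
  moreover have "mset (xword r ss) = (\<Sum>i\<in>{1..r}. image_mset (E i (r+1)) (mset (ss i)))" for ss
    unfolding xword_def mset_concat map_map comp_def mset_map
      sum_set_upt_conv_sum_list_nat[symmetric] set_upt by (simp add: atLeastLessThanSuc_atLeastAtMost)
  ultimately show ?thesis
    by (simp add: xpart_def)
qed

lemma xplus_gens_commute:
  assumes "xplus_gen r z" "xplus_gen r z'" "list_all (valid r) u" "list_all (valid r) v"
  shows "ueq r (mon (u @ z # z' # v)) (mon (u @ z' # z # v))"
proof -
  have "br z z' = fzero"
    using assms(1,2) by (auto simp: xplus_gen_def)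
  then show ?thesis
    using ueq_swap[OF xplus_gen_valid[OF assms(1)] xplus_gen_valid[OF assms(2)] assms(3,4)]
    by (simp add: ueq_def)
qed

lemma xplus_gen_move:
  assumes "xplus_gen r z" "list_all (xplus_gen r) p" "list_all (valid r) u" "list_all (valid r) v"
  shows "ueq r (mon (u @ z # p @ v)) (mon (u @ p @ z # v))"
  using assms(2,3)
proof (induction p arbitrary: u)
  case (Cons z' p)
  have "list_all (valid r) (p @ v)" "list_all (valid r) (u @ [z'])"
    using Cons.prems assms(4) by (auto simp: list_all_iff xplus_gen_valid)
  moreover have "xplus_gen r z'" "list_all (xplus_gen r) p"
    using Cons.prems(1) by auto
  ultimately have "ueq r (mon (u @ z # z' # p @ v)) (mon (u @ z' # z # p @ v))"
    and "ueq r (mon ((u @ [z']) @ z # p @ v)) (mon ((u @ [z']) @ p @ z # v))"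
    using xplus_gens_commute[OF assms(1) _ Cons.prems(2)] Cons.IH[of "u @ [z']"] by auto
  then show ?case
    using ueq_trans by fastforce
qed (simp add: ueq_refl)

lemma xplus_word_reorder:
  assumes "mset x = mset x'" "list_all (xplus_gen r) x'" "list_all (valid r) u" "list_all (valid r) v"
  shows "ueq r (mon (u @ x @ v)) (mon (u @ x' @ v))"
  using assms(1-3)
proof (induction x arbitrary: x' u)
  case (Cons z x)
  then obtain p q where x': "x' = p @ z # q"
    by (metis list.set_intros(1) set_mset_mset split_list)
  with Cons.prems have z: "xplus_gen r z" and pq: "list_all (xplus_gen r) (p @ q)"
    by auto
  have "list_all (valid r) (u @ [z])" "list_all (valid r) (q @ v)"
    using Cons.prems(3) assms(4) z pq by (auto simp: list_all_iff xplus_gen_valid)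
  then have "ueq r (mon (u @ z # x @ v)) (mon (u @ z # p @ q @ v))"
    and "ueq r (mon (u @ z # p @ q @ v)) (mon (u @ p @ z # q @ v))"
    using Cons.IH[of "p @ q" "u @ [z]"] Cons.prems(1) x' pq xplus_gen_move[OF z, of p u "q @ v"] Cons.prems(3)
    by auto
  then show ?case
    using x' ueq_trans by fastforce
qed (simp add: ueq_refl)

definition higher_xwords :: "nat \<Rightarrow> gen list \<Rightarrow> gen list \<Rightarrow> (nat \<Rightarrow> nat) \<Rightarrow> fa set" where
  "higher_xwords r u v d = {mon (u @ x' @ v) | x'. list_all (xplus_gen r) x' \<and> btri r (xdeg x') d}"

definition higher_nxwords :: "nat \<Rightarrow> gen list \<Rightarrow> (nat \<Rightarrow> nat) \<Rightarrow> fa set" where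
  "higher_nxwords r u d = {mon (u @ w' @ x') | w' x'.
     list_all (nminus_gen r) w' \<and> list_all (xplus_gen r) x' \<and> btri r (xdeg x') d}"

lemma higher_xwords_snoc:
  assumes "xplus_gen r z"
  shows "higher_xwords r (u @ [z]) v (xdeg x) \<subseteq> higher_xwords r u v (xdeg (z # x))"
proof
  fix m
  assume "m \<in> higher_xwords r (u @ [z]) v (xdeg x)"
  then obtain x' where "m = mon (u @ z # x' @ v)" "list_all (xplus_gen r) x'" "btri r (xdeg x') (xdeg x)"
    by (auto simp: higher_xwords_def)
  moreover obtain p a where "z = E p (r+1) a"
    using assms by (auto simp: xplus_gen_def)
  ultimately show "m \<in> higher_xwords r u v (xdeg (z # x))"
    unfolding higher_xwords_def using assms
    by (intro CollectI exI[of _ "z # x'"]) (simp add: xdeg_Cons btri_add)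
qed

lemma higher_nxwords_snoc:
  assumes "nminus_gen r y"
  shows "higher_nxwords r (u @ [y]) d \<subseteq> higher_nxwords r u d"
proof
  fix m
  assume "m \<in> higher_nxwords r (u @ [y]) d"
  then obtain w' x' where "m = mon (u @ (y # w') @ x')" "list_all (nminus_gen r) w'"
      "list_all (xplus_gen r) x'" "btri r (xdeg x') d"
    by (auto simp: higher_nxwords_def)
  with assms show "m \<in> higher_nxwords r u d"
    unfolding higher_nxwords_def by (intro CollectI exI[of _ "y # w'"] exI[of _ x']) simp
qed

lemma higher_nxwords_mono: "btri r d' d \<Longrightarrow> higher_nxwords r u d' \<subseteq> higher_nxwords r u d"
  unfolding higher_nxwords_def using btri_trans by blast

lemma nminus_gen_through_xplus_word:
  assumes "list_all (xplus_gen r) x" "nminus_gen r y" "list_all (valid r) u" "list_all (valid r) v"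
  shows "fsub (mon (u @ x @ y # v)) (mon (u @ y # x @ v)) \<in> uspan r (higher_xwords r u v (xdeg x))"
  using assms(1,3)
proof (induction x arbitrary: u)
  case Nil
  then show ?case by (simp add: uspan_zero)
next
  case (Cons z x)
  let ?T = "higher_xwords r u v (xdeg (z # x))"
  obtain p a where z: "z = E p (r+1) a" "xplus_gen r z"
    using Cons.prems(1) by (auto simp: xplus_gen_def)
  obtain q p0 b where y: "y = E q p0 b" "p0 < q" "q \<le> r"
    using assms(2) by (auto simp: nminus_gen_def)
  have zx: "list_all (valid r) (u @ [z])" "list_all (valid r) (x @ v)" "list_all (xplus_gen r) x"
    using Cons.prems assms(4) by (auto simp: list_all_iff xplus_gen_valid)
  have moved: "fsub (mon (u @ z # x @ y # v)) (mon (u @ z # y # x @ v)) \<in> uspan r ?T"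
    using uspan_mono[OF higher_xwords_snoc[OF z(2)] Cons.IH[OF zx(3,1)]] by simp
  have br: "br z y = (if p0 = p then fscale (-1) (mon [E q (r+1) (a+b)]) else fzero)"
    using z y by auto
  have "mon (u @ (E q (r+1) (a+b) # x) @ v) \<in> ?T" if "p0 = p"
    using that zx(3) z y unfolding higher_xwords_def
    by (intro CollectI exI[of _ "E q (r+1) (a+b) # x"]) (auto simp: xplus_gen_def intro: btri_xdeg_raise)
  then have "fmul (mon u) (fmul (br z y) (mon (x @ v))) \<in> uspan r ?T"
    unfolding br using uspan_scale[OF uspan_base]
    by (simp add: fmul_fscale_left fmul_fscale_right fmul_mon_mon uspan_zero)
  then have swapped: "fsub (mon (u @ z # y # x @ v)) (mon (u @ y # z # x @ v)) \<in> uspan r ?T"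
    by (rule uspan_ueq[OF ueq_swap[OF xplus_gen_valid[OF z(2)] nminus_gen_valid[OF assms(2)] Cons.prems(2) zx(2)]])
  show ?case
    using uspan_add[OF moved swapped] by (simp add: fsub_split[symmetric])
qed

lemma nminus_word_through_xplus_word:
  assumes "list_all (nminus_gen r) w" "list_all (xplus_gen r) x" "list_all (valid r) u"
  shows "fsub (mon (u @ x @ w)) (mon (u @ w @ x)) \<in> uspan r (higher_nxwords r u (xdeg x))"
  using assms
proof (induction w arbitrary: x u)
  case Nil
  then show ?case by (simp add: uspan_zero)
next
  case (Cons y w)
  let ?T = "higher_nxwords r u (xdeg x)"
  have y: "nminus_gen r y" and w: "list_all (nminus_gen r) w" "list_all (valid r) w"
    using Cons.prems(1) by (auto simp: list_all_iff nminus_gen_valid)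
  have "higher_xwords r u w (xdeg x) \<subseteq> uspan r ?T"
  proof
    fix m
    assume "m \<in> higher_xwords r u w (xdeg x)"
    then obtain x' where m: "m = mon (u @ x' @ w)" and x': "list_all (xplus_gen r) x'" "btri r (xdeg x') (xdeg x)"
      by (auto simp: higher_xwords_def)
    have "fsub (mon (u @ x' @ w)) (mon (u @ w @ x')) \<in> uspan r ?T"
      using uspan_mono[OF higher_nxwords_mono[OF x'(2)] Cons.IH[OF w(1) x'(1) Cons.prems(3)]] .
    moreover have "mon (u @ w @ x') \<in> uspan r ?T"
      using w(1) x' unfolding higher_nxwords_def by (blast intro: uspan_base)
    ultimately have "fadd (fsub (mon (u @ x' @ w)) (mon (u @ w @ x'))) (mon (u @ w @ x')) \<in> uspan r ?T"
      by (rule uspan_add)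
    then show "m \<in> uspan r ?T"
      by (simp only: m fadd_fsub_cancel)
  qed
  then have past_y: "fsub (mon (u @ x @ y # w)) (mon (u @ y # x @ w)) \<in> uspan r ?T"
    using nminus_gen_through_xplus_word[OF Cons.prems(2) y Cons.prems(3) w(2)] by (rule uspan_subset)
  have "list_all (valid r) (u @ [y])"
    using Cons.prems(3) y by (simp add: nminus_gen_valid)
  then have past_w: "fsub (mon (u @ y # x @ w)) (mon (u @ y # w @ x)) \<in> uspan r ?T"
    using uspan_mono[OF higher_nxwords_snoc[OF y] Cons.IH[OF w(1) Cons.prems(2)]] by simp
  show ?case
    using uspan_add[OF past_y past_w] by (simp add: fsub_split[symmetric])
qed

lemma Uneg_induct [consumes 1, case_names zero add_mon]:
  assumes "g \<in> Uneg r"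
    and "P fzero"
    and "\<And>f c w. P f \<Longrightarrow> list_all (nminus_gen r) w \<Longrightarrow> P (fadd f (fscale c (mon w)))"
  shows "P g"
proof -
  have "\<forall>g. {w. g w \<noteq> 0} = F \<longrightarrow> (\<forall>w\<in>F. list_all (nminus_gen r) w) \<longrightarrow> P g" if "finite F" for F
    using that
  proof (induction F rule: finite_induct)
    case empty
    show ?case
    proof (intro allI impI)
      fix g :: fa
      assume "{w. g w \<noteq> 0} = {}"
      then have "g = fzero"
        by (auto simp: fzero_def)
      with assms(2) show "P g"
        by simp
    qed
  next
    case (insert w F)
    show ?case
    proof (intro allI impI)
      fix g :: fa
      assume g: "{w. g w \<noteq> 0} = insert w F" and nminus: "\<forall>w\<in>insert w F. list_all (nminus_gen r) w"
      have "{v. (g(w := 0)) v \<noteq> 0} = F"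
        using g insert.hyps(2) by auto
      then have "P (g(w := 0))"
        using insert.IH nminus by auto
      moreover have "g = fadd (g(w := 0)) (fscale (g w) (mon w))"
        by (auto simp: fadd_def fscale_def mon_def)
      ultimately show "P g"
        using assms(3) nminus by (metis insertI1)
    qed
  qed
  then show ?thesis
    using assms(1) by (auto simp: Uneg_def)
qed

lemma mon_in_Uneg: "list_all (nminus_gen r) w \<Longrightarrow> mon w \<in> Uneg r"
  by (simp add: Uneg_def mon_def)

definition higher_terms :: "nat \<Rightarrow> (nat \<Rightarrow> nat list) \<Rightarrow> fa set" where
  "higher_terms r ss = {fmul g' (xplus r ss') | g' ss'.
     g' \<in> Uneg r \<and> FplusR r ss' \<and> btri r (ssize ss') (ssize ss)}"

lemma commutator_xplus_mon:
  assumes "FplusR r ss" "list_all (nminus_gen r) w"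
  shows "fcomm (xplus r ss) (mon w) \<in> uspan r (higher_terms r ss)"
proof -
  let ?x = "xword r ss"
  have x: "list_all (xplus_gen r) ?x"
    using assms(1) by (rule xword_xplus_gen)
  have "higher_nxwords r [] (xdeg ?x) \<subseteq> uspan r (higher_terms r ss)"
  proof
    fix m
    assume "m \<in> higher_nxwords r [] (xdeg ?x)"
    then obtain w' x' where m: "m = mon (w' @ x')" and w': "list_all (nminus_gen r) w'"
      and x': "list_all (xplus_gen r) x'" "btri r (xdeg x') (xdeg ?x)"
      by (auto simp: higher_nxwords_def)
    have "ueq r (mon (w' @ x')) (mon (w' @ xword r (xpart x')))"
      using xplus_word_reorder[of x' _ r w' "[]"] mset_xword_xpart[OF x'(1)]
        xword_xplus_gen[OF FplusR_xpart[OF x'(1)]] w' nminus_gen_valid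
      by (simp add: list_all_iff)
    moreover have "btri r (ssize (xpart x')) (ssize ss)"
      using x'(2) xdeg_xword by (simp add: ssize_xpart btri_cong_right)
    then have "fmul (mon w') (xplus r (xpart x')) \<in> higher_terms r ss"
      using x'(1) w' FplusR_xpart mon_in_Uneg unfolding higher_terms_def by blast
    ultimately show "m \<in> uspan r (higher_terms r ss)"
      by (simp add: m xplus_eq_mon_xword fmul_mon_mon uspan_base uspan_ueq)
  qed
  moreover have "fcomm (xplus r ss) (mon w) = fsub (mon ([] @ ?x @ w)) (mon ([] @ w @ ?x))"
    by (simp add: fcomm_def xplus_eq_mon_xword fmul_mon_mon)
  ultimately show ?thesis
    using uspan_subset nminus_word_through_xplus_word[OF assms(2) x, of "[]"] by simp
qed

lemma commutator_xplus_Uneg: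
  assumes "FplusR r ss" "g \<in> Uneg r"
  shows "fcomm (xplus r ss) g \<in> uspan r (higher_terms r ss)"
  using assms(2)
proof (induction rule: Uneg_induct)
  case zero
  then show ?case
    by (simp add: fcomm_def uspan_zero)
next
  case (add_mon f c w)
  then show ?case
    using commutator_xplus_mon[OF assms(1)]
    by (simp add: fcomm_fadd_right fcomm_fscale_right uspan_add uspan_scale)
qed

theorem lemma3p4:
  fixes r :: nat and eta :: "nat \<Rightarrow> nat" and g :: fa and ss :: "nat \<Rightarrow> nat list"
  assumes "2 \<le> r"
    and "\<forall>i. (i = 0 \<or> r < i) \<longrightarrow> eta i = 0"
    and "eta \<noteq> (\<lambda>_. 0)"
    and "g \<in> weight_space r eta"
    and "FplusR r ss"
  shows "\<exists>n c gs sss.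
           (\<forall>k<n. gs k \<in> Uneg r \<and> FplusR r (sss k) \<and> btri r (ssize (sss k)) (ssize ss))
         \<and> ueq r (fcomm (xplus r ss) g)
                (fsum n (\<lambda>k. fscale (c k) (fmul (gs k) (xplus r (sss k)))))"
proof -
  have "fcomm (xplus r ss) g \<in> uspan r (higher_terms r ss)"
    using assms(4,5) by (simp add: weight_space_def commutator_xplus_Uneg)
  then obtain n c B where B: "\<forall>k<n. B k \<in> higher_terms r ss"
    and comb: "ueq r (fcomm (xplus r ss) g) (fsum n (\<lambda>k. fscale (c k) (B k)))"
    using uspan_fsum by blast
  have "\<forall>k<n. \<exists>g' ss'. g' \<in> Uneg r \<and> FplusR r ss' \<and> btri r (ssize ss') (ssize ss)
                     \<and> B k = fmul g' (xplus r ss')"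
    using B unfolding higher_terms_def by blast
  then obtain gs sss where "\<forall>k<n. gs k \<in> Uneg r \<and> FplusR r (sss k) \<and> btri r (ssize (sss k)) (ssize ss)
                              \<and> B k = fmul (gs k) (xplus r (sss k))"
    by metis
  moreover from this have "fsum n (\<lambda>k. fscale (c k) (B k))
                         = fsum n (\<lambda>k. fscale (c k) (fmul (gs k) (xplus r (sss k))))"
    by (simp add: fsum_def)
  ultimately show ?thesis
    using comb by (intro exI[of _ n] exI[of _ c] exI[of _ gs] exI[of _ sss]) auto
qed

end
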